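(* Let $\delta\in(0,1)$ and let $f:G_\delta\to\mathbb{C}$ be a function. Suppose there are a Hilbert space $\mathcal{M}$, a unitary operator $U$ on $\mathcal{M}$ and a map $u:G_\delta\to\mathcal{M}$ such that for all $\lambda,\mu\in G_\delta$, $$1-\overline{f(\mu)}f(\lambda)=\langle(1-\mu_U^*\lambda_U)u(\lambda),u(\mu)\rangle_{\mathcal{M}}.$$ Then $f$ is holomorphic on $G_\delta$.
   Context: $G_\delta=\{x+iy: x,y\in\mathbb{R},\ \frac{x^2}{(1+\delta)^2}+\frac{y^2}{(1-\delta)^2}<1\}$. For $\lambda\in G_\delta$ and a unitary $U$ on $\mathcal{M}$, $\lambda_U=(\delta U^*-\tfrac12\lambda)(1-\tfrac12\lambda U^* )^{-1}$. *)

theory Defs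
  imports "HOL-Analysis.Analysis"
begin

definition G_delta :: "real \<Rightarrow> complex set" where
  "G_delta \<delta> = {z. (Re z)\<^sup>2 / (1 + \<delta>)\<^sup>2 + (Im z)\<^sup>2 / (1 - \<delta>)\<^sup>2 < 1}"

text \<open>A complex Hilbert space, carried by a type 'm with addition from ab_group_add,
  complex scalar multiplication sc and inner product ip (linear in the first argument,
  conjugate-linear in the second), complete for the induced norm.\<close>
definition hnorm :: "('m \<Rightarrow> 'm \<Rightarrow> complex) \<Rightarrow> 'm \<Rightarrow> real" where
  "hnorm ip x = sqrt (Re (ip x x))"

definition hilbert_space ::
  "(complex \<Rightarrow> 'm::ab_group_add \<Rightarrow> 'm) \<Rightarrow> ('m \<Rightarrow> 'm \<Rightarrow> complex) \<Rightarrow> bool" where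
  "hilbert_space sc ip \<longleftrightarrow>
     vector_space sc \<and>
     (\<forall>x y z. ip (x + y) z = ip x z + ip y z) \<and>
     (\<forall>a x y. ip (sc a x) y = a * ip x y) \<and>
     (\<forall>x y. ip y x = cnj (ip x y)) \<and>
     (\<forall>x. Im (ip x x) = 0 \<and> Re (ip x x) \<ge> 0) \<and>
     (\<forall>x. ip x x = 0 \<longrightarrow> x = 0) \<and>
     (\<forall>X :: nat \<Rightarrow> 'm.
        (\<forall>e>0. \<exists>N. \<forall>m\<ge>N. \<forall>n\<ge>N. hnorm ip (X m - X n) < e) \<longrightarrow>
        (\<exists>l. (\<lambda>n. hnorm ip (X n - l)) \<longlonglongrightarrow> 0))"

definition hadj :: "('m \<Rightarrow> 'm \<Rightarrow> complex) \<Rightarrow> ('m \<Rightarrow> 'm) \<Rightarrow> ('m \<Rightarrow> 'm)" where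
  "hadj ip T = (SOME S. \<forall>x y. ip (T x) y = ip x (S y))"

definition unitary_op ::
  "(complex \<Rightarrow> 'm::ab_group_add \<Rightarrow> 'm) \<Rightarrow> ('m \<Rightarrow> 'm \<Rightarrow> complex) \<Rightarrow> ('m \<Rightarrow> 'm) \<Rightarrow> bool" where
  "unitary_op sc ip U \<longleftrightarrow> Vector_Spaces.linear sc sc U \<and> surj U \<and>
     (\<forall>x y. ip (U x) (U y) = ip x y)"

text \<open>lambda_U = (delta U^* - lambda/2)(1 - lambda/2 U^*)^{-1}.\<close>
definition lamU ::
  "(complex \<Rightarrow> 'm::ab_group_add \<Rightarrow> 'm) \<Rightarrow> ('m \<Rightarrow> 'm \<Rightarrow> complex) \<Rightarrow> real \<Rightarrow> ('m \<Rightarrow> 'm)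
     \<Rightarrow> complex \<Rightarrow> ('m \<Rightarrow> 'm)" where
  "lamU sc ip \<delta> U lam =
     (let Us = hadj ip U;
          A = (\<lambda>x. x - sc (lam / 2) (Us x))
      in (\<lambda>x. sc (complex_of_real \<delta>) (Us (inv A x)) - sc (lam / 2) (inv A x)))"

end

theory Submission
  imports Defs
begin

text \<open>
  Let \<open>ru \<lambda> = (1 - \<lambda>/2 U\<^sup>*)\<^sup>-\<^sup>1 u \<lambda>\<close>, where the inverse exists because \<open>U\<^sup>* = U\<^sup>-\<^sup>1\<close> is an
  isometry and \<open>|\<lambda>/2| < 1\<close> on \<open>G\<^sub>\<delta>\<close>, and consider the sesquilinear form on pairs
  \<open>pform (a, a') (b, b') = \<langle>a - U\<^sup>* a', b - U\<^sup>* b'\<rangle> - \<langle>\<delta> U\<^sup>* a - a', \<delta> U\<^sup>* b - b'\<rangle>\<close>.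
  The hypothesis says that it takes the value \<open>1 - cnj (f \<nu>) f \<lambda>\<close> on the pairs
  \<open>(ru \<lambda>, \<lambda>/2 ru \<lambda>)\<close> and \<open>(ru \<nu>, \<nu>/2 ru \<nu>)\<close>, hence the value \<open>- D \<lambda> cnj (D \<nu>)\<close> on their
  difference quotients at \<open>\<mu>\<close>, where \<open>D\<close> is the difference quotient of \<open>f\<close> at \<open>\<mu>\<close>.
  On the other hand \<open>Re pform (Y, \<mu>/2 Y + t) (Y, \<mu>/2 Y + t) \<ge> c \<parallel>Y\<parallel>\<^sup>2 - 2 (1 + \<delta>) \<parallel>Y\<parallel> \<parallel>t\<parallel>\<close>
  with \<open>c = 1 - \<delta>\<^sup>2 - |\<mu> - \<delta> cnj \<mu>|\<close>, and \<open>c > 0\<close> is precisely the condition \<open>\<mu> \<in> G\<^sub>\<delta>\<close>.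
  Writing \<open>Q \<lambda>\<close> for the difference quotient of \<open>ru\<close> at \<open>\<mu>\<close>, that of \<open>\<lambda> \<mapsto> \<lambda>/2 ru \<lambda>\<close> is
  \<open>\<mu>/2 Q \<lambda> + t\<close> with \<open>t = (\<lambda> - \<mu>)/2 Q \<lambda> + ru \<mu> / 2\<close>. Feeding this into the coercivity
  estimate first bounds \<open>Q\<close> near \<open>\<mu>\<close>, and then, applied to \<open>Q \<lambda> - Q \<nu>\<close>, gives
  \<open>|D \<lambda> - D \<nu>| \<le> C (|\<lambda> - \<mu>| + |\<nu> - \<mu>|)\<close>, so \<open>D\<close> converges at \<open>\<mu>\<close>.
\<close>

locale hilbert = vector_space sc for sc :: "complex \<Rightarrow> 'm::ab_group_add \<Rightarrow> 'm" +
  fixes ip :: "'m \<Rightarrow> 'm \<Rightarrow> complex"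
  assumes ip_add_left: "\<And>x y z. ip (x + y) z = ip x z + ip y z"
    and ip_scale_left: "\<And>a x y. ip (sc a x) y = a * ip x y"
    and ip_swap: "\<And>x y. ip y x = cnj (ip x y)"
    and ip_self_real_nonneg: "\<And>x. Im (ip x x) = 0 \<and> Re (ip x x) \<ge> 0"
    and ip_self_eq_0: "\<And>x. ip x x = 0 \<Longrightarrow> x = 0"
    and hilbert_complete: "\<And>X. (\<forall>e>0. \<exists>N. \<forall>m\<ge>N. \<forall>n\<ge>N. hnorm ip (X m - X n) < e) \<Longrightarrow>
        (\<exists>l. (\<lambda>n. hnorm ip (X n - l)) \<longlonglongrightarrow> 0)"

lemma hilbert_space_imp_hilbert: "hilbert_space sc ip \<Longrightarrow> hilbert sc ip"
  unfolding hilbert_space_def hilbert_def hilbert_axioms_def by (elim conjE) (intro conjI; assumption)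

context hilbert
begin

abbreviation nrm :: "'m \<Rightarrow> real" where "nrm \<equiv> hnorm ip"

lemma ip_self_eq: "ip x x = of_real ((nrm x)\<^sup>2)"
  using ip_self_real_nonneg[of x] by (simp add: hnorm_def complex_eq_iff)

lemma ip_diff_left: "ip (x - y) z = ip x z - ip y z"
  using ip_add_left[of "x - y" y z] by simp

lemma ip_add_right: "ip x (y + z) = ip x y + ip x z"
  by (subst (1 2 3) ip_swap) (simp add: ip_add_left)

lemma ip_diff_right: "ip x (y - z) = ip x y - ip x z"
  by (subst (1 2 3) ip_swap) (simp add: ip_diff_left)

lemma ip_scale_right: "ip x (sc a y) = cnj a * ip x y"
  by (subst (1 2) ip_swap) (simp add: ip_scale_left)

lemma ip_zero_left [simp]: "ip 0 z = 0"
  using ip_diff_left[of 0 0 z] by simp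

lemma ip_zero_right [simp]: "ip z 0 = 0"
  using ip_diff_right[of z 0 0] by simp

lemmas ip_simps = ip_add_left ip_add_right ip_diff_left ip_diff_right ip_scale_left ip_scale_right

lemma nrm_nonneg [simp]: "nrm x \<ge> 0"
  using ip_self_real_nonneg[of x] by (simp add: hnorm_def)

lemma nrm_eq_0_iff [simp]: "nrm x = 0 \<longleftrightarrow> x = 0"
  using ip_self_eq[of x] ip_self_eq_0[of x] by auto

lemma nrm_zero [simp]: "nrm 0 = 0"
  by simp

lemma nrm_scale: "nrm (sc a x) = cmod a * nrm x"
proof -
  have "ip (sc a x) (sc a x) = (a * cnj a) * ip x x"
    by (simp only: ip_scale_left ip_scale_right) (simp add: ac_simps)
  then have "(nrm (sc a x))\<^sup>2 = (cmod a * nrm x)\<^sup>2"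
    by (simp only: ip_self_eq complex_norm_square[symmetric] of_real_mult[symmetric]
        of_real_eq_iff power_mult_distrib)
  then show ?thesis
    by (simp add: power2_eq_iff_nonneg)
qed

lemma nrm_minus: "nrm (- x) = nrm x"
  using nrm_scale[of "-1" x] by simp

lemma nrm_minus_commute: "nrm (x - y) = nrm (y - x)"
  using nrm_minus[of "x - y"] by simp

lemma cauchy_schwarz: "cmod (ip x y) \<le> nrm x * nrm y"
proof (cases "y = 0")
  case False
  define k where "k = ip x y"
  define n where "n = (nrm y)\<^sup>2"
  define t where "t = k / of_real n"
  have "n > 0"
    using False by (simp add: n_def)
  have kk: "k * cnj k = of_real ((cmod k)\<^sup>2)"
    by (simp only: complex_norm_square)
  have "ip (x - sc t y) (x - sc t y) = ip x x - cnj t * k - t * cnj k + t * cnj t * of_real n"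
    by (simp only: ip_simps ip_swap[of y x] k_def[symmetric] ip_self_eq[of y] n_def[symmetric])
      (simp add: algebra_simps)
  also have "\<dots> = of_real ((nrm x)\<^sup>2 - (cmod k)\<^sup>2 / n)"
    using \<open>n > 0\<close> by (simp add: t_def ip_self_eq kk mult.commute[of "cnj k"])
  finally have "(nrm (x - sc t y))\<^sup>2 = (nrm x)\<^sup>2 - (cmod k)\<^sup>2 / n"
    by (simp only: ip_self_eq of_real_eq_iff)
  then have "(cmod k)\<^sup>2 / n \<le> (nrm x)\<^sup>2"
    by (metis diff_ge_0_iff_ge zero_le_power2)
  then have "(cmod k)\<^sup>2 \<le> (nrm x * nrm y)\<^sup>2"
    using \<open>n > 0\<close> by (simp add: n_def pos_divide_le_eq power_mult_distrib)
  then show ?thesis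
    unfolding k_def by (rule power2_le_imp_le) simp
qed simp

lemma nrm_add: "nrm (x + y) \<le> nrm x + nrm y"
proof -
  have "ip (x + y) (x + y) = ip x x + (ip x y + cnj (ip x y)) + ip y y"
    by (simp only: ip_add_left ip_add_right ip_swap[of y x]) (simp add: ac_simps)
  then have "(nrm (x + y))\<^sup>2 = (nrm x)\<^sup>2 + 2 * Re (ip x y) + (nrm y)\<^sup>2"
    by (simp add: ip_self_eq complex_add_cnj complex_eq_iff)
  also have "\<dots> \<le> (nrm x + nrm y)\<^sup>2"
    using complex_Re_le_cmod[of "ip x y"] cauchy_schwarz[of x y]
    by (simp add: power2_eq_square algebra_simps)
  finally show ?thesis
    by (rule power2_le_imp_le) simp
qed

lemma nrm_diff: "nrm (x - y) \<le> nrm x + nrm y"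
  using nrm_add[of x "- y"] by (simp add: nrm_minus)

lemma nrm_triangle: "nrm (x - z) \<le> nrm (x - y) + nrm (y - z)"
  using nrm_add[of "x - y" "y - z"] by simp

lemma hadj_eqI:
  assumes "\<And>x y. ip (T x) y = ip x (S y)"
  shows "hadj ip T = S"
proof
  fix y
  have adj: "\<forall>x y. ip (T x) y = ip x (hadj ip T y)"
    unfolding hadj_def by (rule someI[of _ S]) (use assms in blast)
  have "ip x (hadj ip T y - S y) = 0" for x
    using adj assms[of x y] by (simp add: ip_diff_right)
  then show "hadj ip T y = S y"
    using ip_self_eq_0[of "hadj ip T y - S y"] by simp
qed

lemma geometric_cauchy_converges:
  assumes "0 \<le> r" "r < 1" and step: "\<And>n. nrm (X (Suc n) - X n) \<le> r ^ n * a"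
  shows "\<exists>l. (\<lambda>n. nrm (X n - l)) \<longlonglongrightarrow> 0"
proof (rule hilbert_complete, intro allI impI)
  fix e :: real
  assume "e > 0"
  have "a \<ge> 0"
    using order_trans[OF nrm_nonneg step[of 0]] by simp
  have partial: "nrm (X m - X n) \<le> (r ^ n - r ^ m) * a / (1 - r)" if "n \<le> m" for m n
    using that
  proof (induction m rule: dec_induct)
    case (step m)
    have "nrm (X (Suc m) - X n) \<le> nrm (X (Suc m) - X m) + nrm (X m - X n)"
      by (rule nrm_triangle)
    also have "\<dots> \<le> r ^ m * a + (r ^ n - r ^ m) * a / (1 - r)"
      using step.IH by (intro add_mono assms(3))
    also have "\<dots> = (r ^ n - r ^ Suc m) * a / (1 - r)"
      using \<open>r < 1\<close> by (simp add: field_simps)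
    finally show ?case .
  qed simp
  have tail: "nrm (X m - X n) \<le> r ^ min m n * a / (1 - r)" for m n
  proof -
    have "nrm (X m - X n) \<le> (r ^ min m n - r ^ max m n) * a / (1 - r)"
      using partial[of "min m n" "max m n"] partial[of n m] nrm_minus_commute[of "X m" "X n"]
      by (cases "n \<le> m") (simp_all add: min_def max_def)
    also have "\<dots> \<le> r ^ min m n * a / (1 - r)"
      using assms \<open>a \<ge> 0\<close> by (intro divide_right_mono mult_right_mono) auto
    finally show ?thesis .
  qed
  have "(\<lambda>N. r ^ N * a / (1 - r)) \<longlonglongrightarrow> 0 * a / (1 - r)"
    using assms by (intro tendsto_intros LIMSEQ_power_zero) auto
  then have "eventually (\<lambda>N. r ^ N * a / (1 - r) < e) sequentially"
    using \<open>e > 0\<close> by (simp add: order_tendstoD(2))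
  then obtain N where N: "r ^ N * a / (1 - r) < e"
    by (auto simp: eventually_sequentially)
  show "\<exists>N. \<forall>m\<ge>N. \<forall>n\<ge>N. nrm (X m - X n) < e"
  proof (intro exI allI impI)
    fix m n
    assume "m \<ge> N" "n \<ge> N"
    then have "r ^ min m n * a / (1 - r) \<le> r ^ N * a / (1 - r)"
      using assms \<open>a \<ge> 0\<close> by (intro divide_right_mono mult_right_mono power_decreasing) auto
    then show "nrm (X m - X n) < e"
      using tail[of m n] N by linarith
  qed
qed

lemma contraction_has_fixpoint:
  assumes "0 \<le> r" "r < 1" and contr: "\<And>x y. nrm (F x - F y) \<le> r * nrm (x - y)"
  shows "\<exists>l. F l = l"
proof -
  define X where "X n = (F ^^ n) 0" for n
  have X_Suc: "X (Suc n) = F (X n)" for n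
    by (simp add: X_def)
  have "nrm (X (Suc n) - X n) \<le> r ^ n * nrm (X 1 - X 0)" for n
  proof (induction n)
    case (Suc n)
    have "nrm (X (Suc (Suc n)) - X (Suc n)) \<le> r * nrm (X (Suc n) - X n)"
      unfolding X_Suc[of "Suc n"] X_Suc[of n] by (rule contr)
    also have "\<dots> \<le> r * (r ^ n * nrm (X 1 - X 0))"
      using Suc.IH \<open>0 \<le> r\<close> by (rule mult_left_mono)
    finally show ?case
      by simp
  qed simp
  then obtain l where l: "(\<lambda>n. nrm (X n - l)) \<longlonglongrightarrow> 0"
    using geometric_cauchy_converges[OF assms(1,2)] by blast
  have "nrm (F l - l) \<le> r * nrm (X n - l) + nrm (X (Suc n) - l)" for n
  proof -
    have "nrm (F l - l) \<le> nrm (F l - F (X n)) + nrm (X (Suc n) - l)"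
      using nrm_triangle[of "F l" l "F (X n)"] by (simp add: X_Suc)
    also have "nrm (F l - F (X n)) \<le> r * nrm (X n - l)"
      using contr[of l "X n"] by (simp add: nrm_minus_commute)
    finally show ?thesis
      by simp
  qed
  moreover have "(\<lambda>n. r * nrm (X n - l) + nrm (X (Suc n) - l)) \<longlonglongrightarrow> r * 0 + 0"
    by (intro tendsto_add tendsto_mult_left l LIMSEQ_Suc[OF l])
  ultimately have "nrm (F l - l) \<le> 0"
    by (intro LIMSEQ_le_const) auto
  then have "nrm (F l - l) = 0"
    using nrm_nonneg[of "F l - l"] by linarith
  then show ?thesis
    by auto
qed

lemma bij_id_minus_scale_isometry:
  assumes lin: "Vector_Spaces.linear sc sc W" and iso: "\<And>x. nrm (W x) = nrm x"
    and "cmod z < 1"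
  shows "bij (\<lambda>x. x - sc z (W x))"
proof -
  interpret W: Vector_Spaces.linear sc sc W
    by (fact lin)
  have contr: "nrm (sc z (W x) - sc z (W y)) = cmod z * nrm (x - y)" for x y
    by (simp only: W.diff[symmetric] scale_right_diff_distrib[symmetric] nrm_scale iso)
  have "inj (\<lambda>x. x - sc z (W x))"
  proof (rule injI)
    fix x y
    assume "x - sc z (W x) = y - sc z (W y)"
    then have "x - y = sc z (W x) - sc z (W y)"
      by (simp add: algebra_simps)
    then have "nrm (x - y) = cmod z * nrm (x - y)"
      by (metis contr)
    then have "(1 - cmod z) * nrm (x - y) = 0"
      unfolding left_diff_distrib by linarith
    then show "x = y"
      using \<open>cmod z < 1\<close> by simp
  qed
  moreover have "\<exists>l. x = l - sc z (W l)" for x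
  proof -
    obtain l where "x + sc z (W l) = l"
      using contraction_has_fixpoint[of "cmod z" "\<lambda>y. x + sc z (W y)"] contr \<open>cmod z < 1\<close>
      by auto
    then show ?thesis
      by (metis add_diff_cancel_right')
  qed
  ultimately show ?thesis
    by (simp add: bij_def surj_def)
qed

end

locale unitary = hilbert sc ip for sc :: "complex \<Rightarrow> 'm::ab_group_add \<Rightarrow> 'm" and ip +
  fixes U :: "'m \<Rightarrow> 'm"
  assumes unitary: "unitary_op sc ip U"
begin

lemma linear_U: "Vector_Spaces.linear sc sc U"
  using unitary by (simp add: unitary_op_def)

lemma ip_U_U: "ip (U x) (U y) = ip x y"
  using unitary by (simp add: unitary_op_def)

lemma nrm_U: "nrm (U x) = nrm x"
  by (simp add: hnorm_def ip_U_U)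

lemma bij_U: "bij U"
proof (rule bijI)
  interpret U: Vector_Spaces.linear sc sc U
    by (fact linear_U)
  show "inj U"
    by (rule injI) (metis U.diff nrm_U nrm_eq_0_iff right_minus_eq)
  show "surj U"
    using unitary by (simp add: unitary_op_def)
qed

lemma U_inv_U [simp]: "U (inv U x) = x"
  by (meson bij_U bij_inv_eq_iff)

lemma inv_U_U [simp]: "inv U (U x) = x"
  using bij_U by (simp add: bij_is_inj)

lemma linear_inv_U: "Vector_Spaces.linear sc sc (inv U)"
  using bij_module_hom_imp_inv_module_hom[of sc sc U] linear_U bij_U
  by (simp add: module_hom_iff_linear)

lemma ip_inv_U_inv_U: "ip (inv U x) (inv U y) = ip x y"
  by (metis U_inv_U ip_U_U)

lemma nrm_inv_U: "nrm (inv U x) = nrm x"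
  by (metis U_inv_U nrm_U)

lemma ip_U_left: "ip (U x) y = ip x (inv U y)"
  by (metis U_inv_U ip_U_U)

lemma ip_inv_U_left: "ip (inv U x) y = ip x (U y)"
  by (metis U_inv_U ip_U_U)

lemma hadj_U: "hadj ip U = inv U"
  by (rule hadj_eqI) (rule ip_U_left)

end

lemma open_G_delta:
  assumes "0 < \<delta>" "\<delta> < 1"
  shows "open (G_delta \<delta>)"
  unfolding G_delta_def using assms by (intro open_Collect_less) (auto intro!: continuous_intros)

lemma G_delta_iff:
  assumes "0 < \<delta>" "\<delta> < 1"
  shows "lam \<in> G_delta \<delta> \<longleftrightarrow> cmod (lam - of_real \<delta> * cnj lam) < 1 - \<delta>\<^sup>2"
proof -
  have pos: "(1 + \<delta>)\<^sup>2 > 0" "(1 - \<delta>)\<^sup>2 > 0" "1 - \<delta>\<^sup>2 > 0"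
    using assms by (simp_all add: abs_square_less_1)
  have "(Re lam)\<^sup>2 / (1 + \<delta>)\<^sup>2 + (Im lam)\<^sup>2 / (1 - \<delta>)\<^sup>2
      = ((Re lam)\<^sup>2 * (1 - \<delta>)\<^sup>2 + (Im lam)\<^sup>2 * (1 + \<delta>)\<^sup>2) / ((1 + \<delta>)\<^sup>2 * (1 - \<delta>)\<^sup>2)"
    using pos by (simp add: add_frac_eq)
  moreover have "(1 + \<delta>)\<^sup>2 * (1 - \<delta>)\<^sup>2 = (1 - \<delta>\<^sup>2)\<^sup>2"
    by (simp add: power2_eq_square algebra_simps)
  moreover have "(cmod (lam - of_real \<delta> * cnj lam))\<^sup>2 = (Re lam)\<^sup>2 * (1 - \<delta>)\<^sup>2 + (Im lam)\<^sup>2 * (1 + \<delta>)\<^sup>2"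
    by (simp add: cmod_power2) (simp add: power2_eq_square algebra_simps)
  ultimately have "lam \<in> G_delta \<delta> \<longleftrightarrow> (cmod (lam - of_real \<delta> * cnj lam))\<^sup>2 < (1 - \<delta>\<^sup>2)\<^sup>2"
    using pos by (simp add: G_delta_def divide_less_eq_1_pos)
  also have "\<dots> \<longleftrightarrow> cmod (lam - of_real \<delta> * cnj lam) < 1 - \<delta>\<^sup>2"
    using pos(3) by (auto intro: power2_less_imp_less power_strict_mono)
  finally show ?thesis .
qed

lemma norm_lt_of_G_delta:
  assumes "0 < \<delta>" "\<delta> < 1" "lam \<in> G_delta \<delta>"
  shows "cmod lam < 1 + \<delta>"
proof -
  have "(1 - \<delta>) * cmod lam \<le> cmod (lam - of_real \<delta> * cnj lam)"
    using norm_triangle_ineq2[of lam "of_real \<delta> * cnj lam"] assms(1)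
    by (simp add: norm_mult left_diff_distrib)
  also have "\<dots> < (1 - \<delta>) * (1 + \<delta>)"
    using assms G_delta_iff by (simp add: power2_eq_square algebra_simps)
  finally show ?thesis
    using assms(2) by simp
qed

lemma quadratic_inequality_bounds:
  fixes c K q s p :: real
  assumes "0 < c" "0 \<le> q" "0 \<le> K" "0 \<le> s" and ineq: "c * q\<^sup>2 - K * q * s \<le> - p\<^sup>2"
  shows "c * q \<le> K * s" and "2 * sqrt c * \<bar>p\<bar> \<le> K * s"
proof -
  have "c * q\<^sup>2 \<le> K * q * s"
    using ineq zero_le_power2[of p] by linarith
  then have "q * (c * q) \<le> q * (K * s)"
    by (simp add: power2_eq_square mult_ac)
  then show "c * q \<le> K * s"
    using assms by (cases "q = 0") (simp_all add: mult_le_cancel_left)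
  have "p\<^sup>2 \<le> K * q * s - c * q\<^sup>2"
    using ineq by linarith
  have "(2 * sqrt c * \<bar>p\<bar>)\<^sup>2 = 4 * c * p\<^sup>2"
    using \<open>0 < c\<close> by (simp add: power_mult_distrib)
  also have "\<dots> \<le> 4 * c * (K * q * s - c * q\<^sup>2)"
    using \<open>0 < c\<close> \<open>p\<^sup>2 \<le> K * q * s - c * q\<^sup>2\<close> by (intro mult_left_mono) auto
  also have "\<dots> = (K * s)\<^sup>2 - (2 * c * q - K * s)\<^sup>2"
    by (simp add: power2_eq_square algebra_simps)
  also have "\<dots> \<le> (K * s)\<^sup>2"
    by simp
  finally show "2 * sqrt c * \<bar>p\<bar> \<le> K * s"
    by (rule power2_le_imp_le) (use assms in simp)
qed

lemma limit_exists_if_dist_le: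
  fixes g :: "'a::{perfect_space,metric_space} \<Rightarrow> 'b::complete_space"
  assumes "0 < d"
    and bound: "\<And>x y. x \<noteq> m \<Longrightarrow> y \<noteq> m \<Longrightarrow> dist x m < d \<Longrightarrow> dist y m < d \<Longrightarrow>
      dist (g x) (g y) \<le> C * (dist x m + dist y m)"
  shows "\<exists>L. (g \<longlongrightarrow> L) (at m)"
proof -
  have cauchy: "cauchy_filter (filtermap g (at m))"
    unfolding cauchy_filter_metric_filtermap
  proof (intro allI impI)
    fix e :: real
    assume "e > 0"
    define r where "r = min d (e / (2 * (\<bar>C\<bar> + 1)))"
    have "r > 0"
      using \<open>0 < d\<close> \<open>e > 0\<close> by (simp add: r_def)
    have "r \<le> e / (2 * (\<bar>C\<bar> + 1))"
      by (simp add: r_def)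
    then have "2 * r \<le> e / (\<bar>C\<bar> + 1)"
      by (simp add: field_simps)
    have "dist (g x) (g y) < e" if "x \<noteq> m \<and> dist x m < r" "y \<noteq> m \<and> dist y m < r" for x y
    proof -
      have "dist (g x) (g y) \<le> C * (dist x m + dist y m)"
        using that bound by (simp add: r_def)
      also have "\<dots> \<le> \<bar>C\<bar> * (dist x m + dist y m)"
        by (intro mult_right_mono) auto
      also have "\<dots> \<le> \<bar>C\<bar> * (2 * r)"
        using that by (intro mult_left_mono) auto
      also have "\<dots> \<le> \<bar>C\<bar> * (e / (\<bar>C\<bar> + 1))"
        using \<open>2 * r \<le> e / (\<bar>C\<bar> + 1)\<close> by (intro mult_left_mono) auto
      also have "\<dots> < e"
        using \<open>e > 0\<close> by (simp add: field_simps)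
      finally show ?thesis .
    qed
    moreover have "eventually (\<lambda>x. x \<noteq> m \<and> dist x m < r) (at m)"
      using \<open>r > 0\<close> by (auto simp: eventually_at)
    ultimately show "\<exists>P. eventually P (at m) \<and> (\<forall>x y. P x \<and> P y \<longrightarrow> dist (g x) (g y) < e)"
      by blast
  qed
  have "\<exists>L. filtermap g (at m) \<le> nhds L"
    by (rule cauchy_filter_complete_converges[OF cauchy complete_UNIV]) (simp_all add: filtermap_bot_iff)
  then show ?thesis
    by (simp add: filterlim_def)
qed

locale ellipse_realization = unitary sc ip U
  for sc :: "complex \<Rightarrow> 'm::ab_group_add \<Rightarrow> 'm" and ip and U +
  fixes \<delta> :: real and f :: "complex \<Rightarrow> complex" and u :: "complex \<Rightarrow> 'm"
  assumes delta_pos: "0 < \<delta>" and delta_lt_1: "\<delta> < 1"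
    and realization: "\<forall>lam\<in>G_delta \<delta>. \<forall>mu\<in>G_delta \<delta>.
      1 - cnj (f mu) * f lam =
      ip (u lam - hadj ip (lamU sc ip \<delta> U mu) (lamU sc ip \<delta> U lam (u lam))) (u mu)"
begin

interpretation inv_U: Vector_Spaces.linear sc sc "inv U"
  by (fact linear_inv_U)

lemma half_in_unit_disc: "lam \<in> G_delta \<delta> \<Longrightarrow> cmod (lam / 2) < 1"
  using norm_lt_of_G_delta[OF delta_pos delta_lt_1, of lam] delta_lt_1 by (simp add: norm_divide)

definition res :: "complex \<Rightarrow> 'm \<Rightarrow> 'm" where
  "res z = inv (\<lambda>x. x - sc z (inv U x))"

lemma res_eq: "cmod z < 1 \<Longrightarrow> res z x - sc z (inv U (res z x)) = x"
  using surj_f_inv_f[OF bij_is_surj[OF bij_id_minus_scale_isometry[OF linear_inv_U nrm_inv_U]]]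
  unfolding res_def by simp

lemma lamU_eq: "lamU sc ip \<delta> U lam x = sc \<delta> (inv U (res (lam / 2) x)) - sc (lam / 2) (res (lam / 2) x)"
  by (simp add: lamU_def Let_def hadj_U res_def)

lemma ip_hadj_lamU:
  assumes "cmod (lam / 2) < 1"
  shows "ip (hadj ip (lamU sc ip \<delta> U lam) v) w = ip v (lamU sc ip \<delta> U lam w)"
proof -
  define z where "z = lam / 2"
  define res' where "res' = inv (\<lambda>x. x - sc (cnj z) (U x))"
  have res'_eq: "res' x - sc (cnj z) (U (res' x)) = x" for x
    using surj_f_inv_f[OF bij_is_surj[OF bij_id_minus_scale_isometry[OF linear_U nrm_U]]] assms
    unfolding res'_def z_def by simp
  define S where "S x = res' (sc \<delta> (U x) - sc (cnj z) x)" for x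
  have adj: "ip (lamU sc ip \<delta> U lam x) x' = ip x (S x')" for x x'
  proof -
    define b where "b = res z x"
    have "ip (lamU sc ip \<delta> U lam x) x' = ip b (sc \<delta> (U x') - sc (cnj z) x')"
      by (simp add: lamU_eq z_def[symmetric] b_def ip_simps ip_inv_U_left)
    also have "\<dots> = ip b (S x' - sc (cnj z) (U (S x')))"
      by (simp add: S_def res'_eq)
    also have "\<dots> = ip (b - sc z (inv U b)) (S x')"
      by (simp add: ip_simps ip_inv_U_left)
    also have "b - sc z (inv U b) = x"
      using res_eq assms by (simp add: b_def z_def)
    finally show ?thesis .
  qed
  have "ip (S v) w = ip v (lamU sc ip \<delta> U lam w)"
    using adj[of w v] ip_swap[of "S v" w] ip_swap[of v "lamU sc ip \<delta> U lam w"] by simp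
  then show ?thesis
    using hadj_eqI[OF adj] by simp
qed

lemma kernel_identity:
  assumes "lam \<in> G_delta \<delta>" "mu \<in> G_delta \<delta>"
  shows "ip (u lam) (u mu) - ip (lamU sc ip \<delta> U lam (u lam)) (lamU sc ip \<delta> U mu (u mu))
    = 1 - cnj (f mu) * f lam"
  using realization assms ip_hadj_lamU[OF half_in_unit_disc[OF assms(2)]] by (simp add: ip_diff_left)

definition ru :: "complex \<Rightarrow> 'm" where
  "ru lam = res (lam / 2) (u lam)"

definition ru_half :: "complex \<Rightarrow> 'm" where
  "ru_half lam = sc (lam / 2) (ru lam)"

definition pform :: "'m \<Rightarrow> 'm \<Rightarrow> 'm \<Rightarrow> 'm \<Rightarrow> complex" where
  "pform a a' b b' = ip (a - inv U a') (b - inv U b') - ip (sc \<delta> (inv U a) - a') (sc \<delta> (inv U b) - b')"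

lemma pform_ru:
  assumes "lam \<in> G_delta \<delta>" "nu \<in> G_delta \<delta>"
  shows "pform (ru lam) (ru_half lam) (ru nu) (ru_half nu) = 1 - cnj (f nu) * f lam"
proof -
  have u_eq: "u l = ru l - inv U (ru_half l)" if "l \<in> G_delta \<delta>" for l
    using res_eq[OF half_in_unit_disc[OF that]] by (simp add: ru_def ru_half_def inv_U.scale)
  have lamU_u: "lamU sc ip \<delta> U l (u l) = sc \<delta> (inv U (ru l)) - ru_half l" for l
    by (simp add: lamU_eq ru_def ru_half_def)
  have "pform (ru lam) (ru_half lam) (ru nu) (ru_half nu)
      = ip (u lam) (u nu) - ip (lamU sc ip \<delta> U lam (u lam)) (lamU sc ip \<delta> U nu (u nu))"
    by (unfold pform_def lamU_u) (simp only: u_eq[OF assms(1)] u_eq[OF assms(2)])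
  then show ?thesis
    using kernel_identity[OF assms] by simp
qed

lemma pform_expand:
  "pform a a' b b' = of_real (1 - \<delta>\<^sup>2) * ip a b - ip a (inv U b') - ip (inv U a') b
     + of_real \<delta> * ip (inv U a) b' + of_real \<delta> * ip a' (inv U b)"
  by (simp add: pform_def ip_simps ip_inv_U_inv_U algebra_simps power2_eq_square)

lemma pform_diff_left: "pform (a - c) (a' - c') b b' = pform a a' b b' - pform c c' b b'"
  by (simp add: pform_expand ip_simps inv_U.diff algebra_simps)

lemma pform_diff_right: "pform a a' (b - c) (b' - c') = pform a a' b b' - pform a a' c c'"
  by (simp add: pform_expand ip_simps inv_U.diff algebra_simps)

lemma pform_scale_left: "pform (sc k a) (sc k a') b b' = k * pform a a' b b'"
  by (simp add: pform_expand ip_simps inv_U.scale algebra_simps)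

lemma pform_scale_right: "pform a a' (sc k b) (sc k b') = cnj k * pform a a' b b'"
  by (simp add: pform_expand ip_simps inv_U.scale algebra_simps)

definition coercivity :: "complex \<Rightarrow> real" where
  "coercivity w = 1 - \<delta>\<^sup>2 - 2 * cmod (w - of_real \<delta> * cnj w)"

lemma coercivity_pos:
  assumes "mu \<in> G_delta \<delta>"
  shows "0 < coercivity (mu / 2)"
proof -
  have "mu - of_real \<delta> * cnj mu = 2 * (mu / 2 - of_real \<delta> * cnj (mu / 2))"
    by (simp add: field_simps)
  then have "cmod (mu - of_real \<delta> * cnj mu) = 2 * cmod (mu / 2 - of_real \<delta> * cnj (mu / 2))"
    by (metis norm_mult norm_numeral)
  then show ?thesis
    using G_delta_iff[OF delta_pos delta_lt_1] assms by (simp add: coercivity_def)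
qed

lemma Re_pform_coercive:
  "coercivity w * (nrm Y)\<^sup>2 - 2 * (1 + \<delta>) * nrm Y * nrm t \<le> Re (pform Y (sc w Y + t) Y (sc w Y + t))"
proof -
  define p where "p = ip (inv U Y) Y"
  define q where "q = (w - of_real \<delta> * cnj w) * p"
  define a where "a = ip (inv U Y) t"
  define b where "b = ip Y (inv U t)"
  have swaps: "ip Y (inv U Y) = cnj p" "ip t (inv U Y) = cnj a" "ip (inv U t) Y = cnj b"
    unfolding p_def a_def b_def by (rule ip_swap)+
  have "pform Y (sc w Y + t) Y (sc w Y + t)
      = of_real ((1 - \<delta>\<^sup>2) * (nrm Y)\<^sup>2) - (q + cnj q) + of_real \<delta> * (a + cnj a) - (b + cnj b)"
    by (simp add: pform_expand ip_simps inv_U.add inv_U.scale swaps p_def[symmetric] a_def[symmetric]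
        b_def[symmetric] q_def ip_self_eq algebra_simps)
  then have split: "Re (pform Y (sc w Y + t) Y (sc w Y + t))
      = (1 - \<delta>\<^sup>2) * (nrm Y)\<^sup>2 - 2 * Re q + 2 * \<delta> * Re a - 2 * Re b"
    by simp
  have "cmod p \<le> (nrm Y)\<^sup>2"
    using cauchy_schwarz[of "inv U Y" Y] by (simp add: p_def nrm_inv_U power2_eq_square)
  then have "Re q \<le> cmod (w - of_real \<delta> * cnj w) * (nrm Y)\<^sup>2"
    using complex_Re_le_cmod[of q] by (simp add: q_def norm_mult mult_left_mono order_trans)
  moreover have "\<bar>Re a\<bar> \<le> nrm Y * nrm t" "\<bar>Re b\<bar> \<le> nrm Y * nrm t"
    using abs_Re_le_cmod[of a] abs_Re_le_cmod[of b] cauchy_schwarz[of "inv U Y" t]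
      cauchy_schwarz[of Y "inv U t"]
    by (simp_all add: a_def b_def nrm_inv_U)
  moreover have "- (\<delta> * (nrm Y * nrm t)) \<le> \<delta> * Re a"
    using mult_left_mono[of "- (nrm Y * nrm t)" "Re a" \<delta>] \<open>\<bar>Re a\<bar> \<le> nrm Y * nrm t\<close> delta_pos
    by simp
  ultimately show ?thesis
    unfolding coercivity_def split by (simp add: algebra_simps)
qed

definition dq :: "(complex \<Rightarrow> 'm) \<Rightarrow> complex \<Rightarrow> complex \<Rightarrow> 'm" where
  "dq g mu lam = sc (1 / (lam - mu)) (g lam - g mu)"

definition dqf :: "complex \<Rightarrow> complex \<Rightarrow> complex" where
  "dqf mu lam = (f lam - f mu) / (lam - mu)"

lemma pform_dq:
  assumes "mu \<in> G_delta \<delta>" "lam \<in> G_delta \<delta>" "nu \<in> G_delta \<delta>"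
  shows "pform (dq ru mu lam) (dq ru_half mu lam) (dq ru mu nu) (dq ru_half mu nu)
    = - dqf mu lam * cnj (dqf mu nu)"
proof -
  define c where "c = 1 / (lam - mu)"
  define d where "d = 1 / (nu - mu)"
  have "pform (dq ru mu lam) (dq ru_half mu lam) (dq ru mu nu) (dq ru_half mu nu)
      = - (c * (f lam - f mu)) * cnj (d * (f nu - f mu))"
    unfolding dq_def c_def[symmetric] d_def[symmetric]
    by (simp only: pform_scale_left pform_scale_right pform_diff_left pform_diff_right pform_ru assms)
      (simp add: algebra_simps)
  moreover have "c * (f lam - f mu) = dqf mu lam" "d * (f nu - f mu) = dqf mu nu"
    by (simp_all add: c_def d_def dqf_def)
  ultimately show ?thesis
    by simp
qed

lemma Re_pform_dq_diff:
  assumes "mu \<in> G_delta \<delta>" "lam \<in> G_delta \<delta>" "nu \<in> G_delta \<delta>"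
  shows "Re (pform (dq ru mu lam - dq ru mu nu) (dq ru_half mu lam - dq ru_half mu nu)
      (dq ru mu lam - dq ru mu nu) (dq ru_half mu lam - dq ru_half mu nu))
    = - (cmod (dqf mu lam - dqf mu nu))\<^sup>2"
proof -
  have "pform (dq ru mu lam - dq ru mu nu) (dq ru_half mu lam - dq ru_half mu nu)
      (dq ru mu lam - dq ru mu nu) (dq ru_half mu lam - dq ru_half mu nu)
    = - of_real ((cmod (dqf mu lam - dqf mu nu))\<^sup>2)"
    unfolding complex_norm_square
    by (simp only: pform_diff_left pform_diff_right pform_dq assms) (simp add: algebra_simps)
  then show ?thesis
    by simp
qed

lemma dq_ru_half_split:
  assumes "lam \<noteq> mu"
  shows "dq ru_half mu lam
    = sc (mu / 2) (dq ru mu lam) + (sc ((lam - mu) / 2) (dq ru mu lam) + sc (1 / 2) (ru mu))"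
proof -
  define c where "c = 1 / (lam - mu)"
  have "sc (mu / 2) (dq ru mu lam) + (sc ((lam - mu) / 2) (dq ru mu lam) + sc (1 / 2) (ru mu))
      = sc (lam / 2) (dq ru mu lam) + sc (1 / 2) (ru mu)"
    by (simp add: add.assoc[symmetric] scale_left_distrib[symmetric] add_divide_distrib[symmetric])
  also have "\<dots> = sc (lam / 2 * c) (ru lam) - sc (lam / 2 * c - 1 / 2) (ru mu)"
    by (simp add: dq_def c_def[symmetric] scale_right_diff_distrib scale_left_diff_distrib)
  also have "lam / 2 * c - 1 / 2 = mu / 2 * c"
    using assms by (simp add: c_def field_simps)
  finally show ?thesis
    by (simp add: dq_def ru_half_def c_def[symmetric] scale_right_diff_distrib mult.commute)
qed

lemma nrm_dq_ru_le:
  assumes mu: "mu \<in> G_delta \<delta>" and lam: "lam \<in> G_delta \<delta>" "lam \<noteq> mu"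
    and near: "2 * (1 + \<delta>) * cmod (lam - mu) \<le> coercivity (mu / 2)"
  shows "nrm (dq ru mu lam) \<le> 2 * (1 + \<delta>) * nrm (ru mu) / coercivity (mu / 2)"
proof -
  define c where "c = coercivity (mu / 2)"
  define K where "K = 2 * (1 + \<delta>)"
  define Q where "Q = dq ru mu lam"
  define t where "t = sc ((lam - mu) / 2) Q + sc (1 / 2) (ru mu)"
  have "0 < c" "0 \<le> K"
    using coercivity_pos[OF mu] delta_pos by (simp_all add: c_def K_def)
  have "c * (nrm Q)\<^sup>2 - K * nrm Q * nrm t \<le> Re (pform Q (sc (mu / 2) Q + t) Q (sc (mu / 2) Q + t))"
    unfolding c_def K_def by (rule Re_pform_coercive)
  also have "sc (mu / 2) Q + t = dq ru_half mu lam"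
    unfolding Q_def t_def by (rule dq_ru_half_split[OF lam(2), symmetric])
  also have "Re (pform Q (dq ru_half mu lam) Q (dq ru_half mu lam)) = - (cmod (dqf mu lam))\<^sup>2"
    \<comment> \<open>all difference quotients at \<open>\<mu>\<close> itself vanish, as \<open>1 / 0 = 0\<close>\<close>
    using Re_pform_dq_diff[OF mu lam(1) mu] by (simp add: Q_def dq_def dqf_def)
  finally have "c * nrm Q \<le> K * nrm t"
    by (rule quadratic_inequality_bounds(1)[OF \<open>0 < c\<close> nrm_nonneg \<open>0 \<le> K\<close> nrm_nonneg])
  moreover have "nrm t \<le> cmod (lam - mu) / 2 * nrm Q + nrm (ru mu) / 2"
    using nrm_add[of "sc ((lam - mu) / 2) Q" "sc (1 / 2) (ru mu)"]
    by (simp add: t_def nrm_scale norm_divide)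
  note mult_left_mono[OF this \<open>0 \<le> K\<close>]
  moreover have "K * cmod (lam - mu) * nrm Q \<le> c * nrm Q"
    using near by (simp add: K_def c_def mult_right_mono)
  ultimately have "c * nrm Q \<le> K * nrm (ru mu)"
    by (simp add: algebra_simps)
  then show ?thesis
    using \<open>0 < c\<close> by (simp add: Q_def c_def K_def pos_le_divide_eq mult.commute)
qed

lemma dqf_dist_le:
  assumes mu: "mu \<in> G_delta \<delta>"
    and lam: "lam \<in> G_delta \<delta>" "lam \<noteq> mu" "nrm (dq ru mu lam) \<le> M"
    and nu: "nu \<in> G_delta \<delta>" "nu \<noteq> mu" "nrm (dq ru mu nu) \<le> M"
  shows "2 * sqrt (coercivity (mu / 2)) * cmod (dqf mu lam - dqf mu nu)
    \<le> (1 + \<delta>) * M * (cmod (lam - mu) + cmod (nu - mu))"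
proof -
  define c where "c = coercivity (mu / 2)"
  define K where "K = 2 * (1 + \<delta>)"
  define Y where "Y = dq ru mu lam - dq ru mu nu"
  define t where "t = sc ((lam - mu) / 2) (dq ru mu lam) - sc ((nu - mu) / 2) (dq ru mu nu)"
  have "0 < c" "0 \<le> K"
    using coercivity_pos[OF mu] delta_pos by (simp_all add: c_def K_def)
  have "c * (nrm Y)\<^sup>2 - K * nrm Y * nrm t \<le> Re (pform Y (sc (mu / 2) Y + t) Y (sc (mu / 2) Y + t))"
    unfolding c_def K_def by (rule Re_pform_coercive)
  also have "sc (mu / 2) Y + t = dq ru_half mu lam - dq ru_half mu nu"
    unfolding dq_ru_half_split[OF lam(2)] dq_ru_half_split[OF nu(2)] Y_def t_def
    by (simp add: scale_right_diff_distrib algebra_simps)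
  also have "Re (pform Y (dq ru_half mu lam - dq ru_half mu nu) Y (dq ru_half mu lam - dq ru_half mu nu))
      = - (cmod (dqf mu lam - dqf mu nu))\<^sup>2"
    unfolding Y_def by (rule Re_pform_dq_diff[OF mu lam(1) nu(1)])
  finally have "2 * sqrt c * \<bar>cmod (dqf mu lam - dqf mu nu)\<bar> \<le> K * nrm t"
    by (rule quadratic_inequality_bounds(2)[OF \<open>0 < c\<close> nrm_nonneg \<open>0 \<le> K\<close> nrm_nonneg])
  moreover have "nrm t \<le> cmod (lam - mu) / 2 * M + cmod (nu - mu) / 2 * M"
  proof -
    have "nrm t \<le> cmod (lam - mu) / 2 * nrm (dq ru mu lam) + cmod (nu - mu) / 2 * nrm (dq ru mu nu)"
      using nrm_diff[of "sc ((lam - mu) / 2) (dq ru mu lam)" "sc ((nu - mu) / 2) (dq ru mu nu)"]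
      by (simp add: t_def nrm_scale norm_divide)
    also have "\<dots> \<le> cmod (lam - mu) / 2 * M + cmod (nu - mu) / 2 * M"
      using lam(3) nu(3) by (intro add_mono mult_left_mono) auto
    finally show ?thesis .
  qed
  note mult_left_mono[OF this \<open>0 \<le> K\<close>]
  ultimately have "2 * sqrt c * cmod (dqf mu lam - dqf mu nu)
      \<le> K * (cmod (lam - mu) / 2 * M + cmod (nu - mu) / 2 * M)"
    by simp
  also have "\<dots> = (1 + \<delta>) * M * (cmod (lam - mu) + cmod (nu - mu))"
    by (simp add: K_def field_simps)
  finally show ?thesis
    by (simp add: c_def)
qed

lemma dqf_has_limit:
  assumes mu: "mu \<in> G_delta \<delta>"
  shows "\<exists>L. (dqf mu \<longlongrightarrow> L) (at mu)"
proof -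
  define c where "c = coercivity (mu / 2)"
  define K where "K = 2 * (1 + \<delta>)"
  define M where "M = K * nrm (ru mu) / c"
  have "0 < c" "0 < K"
    using coercivity_pos[OF mu] delta_pos by (simp_all add: c_def K_def)
  obtain e where "0 < e" "ball mu e \<subseteq> G_delta \<delta>"
    using open_G_delta[OF delta_pos delta_lt_1] mu open_contains_ball by blast
  define d where "d = min e (c / K)"
  have "0 < d"
    using \<open>0 < e\<close> \<open>0 < c\<close> \<open>0 < K\<close> by (simp add: d_def)
  have near: "l \<in> G_delta \<delta> \<and> nrm (dq ru mu l) \<le> M" if "l \<noteq> mu" "dist l mu < d" for l
  proof -
    have "l \<in> G_delta \<delta>"
      using that \<open>ball mu e \<subseteq> G_delta \<delta>\<close> by (auto simp: d_def dist_commute)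
    moreover have "K * cmod (l - mu) \<le> c"
      using that \<open>0 < K\<close> by (simp add: d_def dist_norm pos_less_divide_eq mult.commute)
    ultimately show ?thesis
      using nrm_dq_ru_le[OF mu _ that(1)] by (simp add: M_def K_def c_def)
  qed
  show ?thesis
  proof (rule limit_exists_if_dist_le[OF \<open>0 < d\<close>])
    fix l l'
    assume "l \<noteq> mu" "l' \<noteq> mu" "dist l mu < d" "dist l' mu < d"
    then have "2 * sqrt c * cmod (dqf mu l - dqf mu l') \<le> (1 + \<delta>) * M * (cmod (l - mu) + cmod (l' - mu))"
      using dqf_dist_le[OF mu] near by (simp add: c_def)
    then show "dist (dqf mu l) (dqf mu l') \<le> (1 + \<delta>) * M / (2 * sqrt c) * (dist l mu + dist l' mu)"
      using \<open>0 < c\<close> by (simp add: dist_norm field_simps)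
  qed
qed

theorem f_holomorphic: "f holomorphic_on G_delta \<delta>"
proof -
  have "\<exists>f'. (f has_field_derivative f') (at mu)" if "mu \<in> G_delta \<delta>" for mu
    using dqf_has_limit[OF that] by (auto simp: has_field_derivative_iff dqf_def[abs_def])
  then show ?thesis
    by (simp add: holomorphic_on_open open_G_delta delta_pos delta_lt_1)
qed

end

theorem proposition2p9:
  fixes \<delta> :: real and f :: "complex \<Rightarrow> complex"
    and sc :: "complex \<Rightarrow> 'm::ab_group_add \<Rightarrow> 'm" and ip :: "'m \<Rightarrow> 'm \<Rightarrow> complex"
    and U :: "'m \<Rightarrow> 'm" and u :: "complex \<Rightarrow> 'm"
  assumes "0 < \<delta>" and "\<delta> < 1"
    and "hilbert_space sc ip"
    and "unitary_op sc ip U"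
    and "\<forall>lam\<in>G_delta \<delta>. \<forall>mu\<in>G_delta \<delta>.
           1 - cnj (f mu) * f lam =
           ip (u lam - hadj ip (lamU sc ip \<delta> U mu) (lamU sc ip \<delta> U lam (u lam))) (u mu)"
  shows "f holomorphic_on G_delta \<delta>"
proof -
  interpret ellipse_realization sc ip U \<delta> f u
    by (intro ellipse_realization.intro unitary.intro ellipse_realization_axioms.intro
        unitary_axioms.intro hilbert_space_imp_hilbert) (fact assms)+
  show ?thesis
    by (fact f_holomorphic)
qed

end
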